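(* Let $N=(G=(V,E),\sigma,u,s)$ be a skew-symmetric network, $f$ an IS-flow in $N$, $g$ a shortest IS-flow in the network $(G^+,u_f)$, and $f':=f\oplus g$. Let $k$ and $k'$ be the minimum numbers of arcs of an r-augmenting path for $f$ and for $f'$, respectively (with $\min\emptyset=+\infty$). Then $k'\ge k$. Moreover, if $g$ is a shortest blocking IS-flow in $(G^+,u_f)$, then $k'>k$.
   Context: A skew-symmetric graph is a finite directed graph $G=(V,E)$ (parallel arcs allowed) with a map $\sigma$ of $V\cup E$ onto itself such that $\sigma(x)\ne x$, $\sigma(\sigma(x))=x$ for all $x$, $\sigma(V)=V$, and for each arc $a$ from $v$ to $w$, $\sigma(a)$ is an arc from $\sigma(w)$ to $\sigma(v)$. A function on arcs is symmetric if it takes equal values on $a$ and $\sigma(a)$. A skew-symmetric network $(H,\sigma,h,s)$ has a symmetric capacity $h:$ arcs $\to\mathbb Z_{\ge0}$ and source $s$, sink $s'=\sigma(s)$. A flow is a nonnegative function bounded by the capacity with conservation at all nodes other than $s,s'$; its value $|g|$ is the net outflow at $s$. An IS-flow is an integer-valued symmetric flow. $G^+=(V,E^+)$ is obtained from $G$ by adding for each arc $a=(x,y)\in E$ a reverse arc $a^R=(y,x)$, with $\sigma(a^R)=(\sigma(a))^R$; residual capacities $u_f(a)=u(a)-f(a)$ for $a\in E$, $u_f(a^R)=f(a)$; $(G^+,u_f)$ is a skew-symmetric network. For an IS-flow $g$ in $(G^+,u_f)$, $f\oplus g$ is the IS-flow in $N$ given by $(f\oplus g)(a)=f(a)+g(a)-g(a^R)$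 for $a\in E$. For symmetric nonnegative integer $h$, a path $P$ is $h$-regular if $h(a)>0$ for all arcs $a$ of $P$ and $h(a)\ge2$ for every arc $a$ of $P$ whose mate $\sigma(a)$ is also on $P$. An r-augmenting path for $f$ is a $u_f$-regular path from $s$ to $s'$ in $G^+$. A regular path is one containing no pair of arcs $a,\sigma(a)$. The split-graph $S(H,h)$ replaces each arc $a=(x,y)$ by parallel arcs $a_1,a_2$ from $x$ to $y$ with capacities $\lceil h(a)/2\rceil,\lfloor h(a)/2\rfloor$, deleting zero-capacity arcs, with $\sigma(a_i)=(\sigma(a))_i$. $\mathrm{r\text{-}dist}_{S(H,h)}(s,s')$ is the minimum number of arcs of a regular $s$ to $s'$ path in $S(H,h)$ ($+\infty$ if none). For an IS-flow $g$ in $(H,h)$ with arc set $W$: $g$ is shortest if $\sum_{e\in W}g(e)=|g|\cdot\mathrm{r\text{-}dist}_{S(H,h)}(s,s')$; $g$ is shortest blocking if it is shortest and $\mathrm{r\text{-}dist}_{S(H,h-g)}(s,s')>\mathrm{r\text{-}dist}_{S(H,h)}(s,s')$. *)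

theory Defs
  imports Main "HOL-Library.Extended_Nat"
begin

text \<open>The skew-symmetry sigma is split into a map sv on
 vertices and a map se on arcs.  Capacities and flows are integer-valued functions
 on arcs (only their values on E matter).\<close>

definition skew_sym_graph ::
  "'v set \<Rightarrow> 'a set \<Rightarrow> ('a \<Rightarrow> 'v) \<Rightarrow> ('a \<Rightarrow> 'v) \<Rightarrow> ('v \<Rightarrow> 'v) \<Rightarrow> ('a \<Rightarrow> 'a) \<Rightarrow> bool" where
  "skew_sym_graph V E src tgt sv se \<longleftrightarrow>
     finite V \<and> finite E \<and>
     (\<forall>a\<in>E. src a \<in> V \<and> tgt a \<in> V) \<and>
     (\<forall>v\<in>V. sv v \<in> V \<and> sv v \<noteq> v \<and> sv (sv v) = v) \<and>
     (\<forall>a\<in>E. se a \<in> E \<and> se a \<noteq> a \<and> se (se a) = a \<and>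
              src (se a) = sv (tgt a) \<and> tgt (se a) = sv (src a))"

definition symmetric_on :: "'a set \<Rightarrow> ('a \<Rightarrow> 'a) \<Rightarrow> ('a \<Rightarrow> int) \<Rightarrow> bool" where
  "symmetric_on E se h \<longleftrightarrow> (\<forall>a\<in>E. h (se a) = h a)"

text \<open>Skew-symmetric network (G, sigma, u, s); the sink is sv s.\<close>
definition skew_network ::
  "'v set \<Rightarrow> 'a set \<Rightarrow> ('a \<Rightarrow> 'v) \<Rightarrow> ('a \<Rightarrow> 'v) \<Rightarrow> ('v \<Rightarrow> 'v) \<Rightarrow> ('a \<Rightarrow> 'a)
    \<Rightarrow> ('a \<Rightarrow> int) \<Rightarrow> 'v \<Rightarrow> bool" where
  "skew_network V E src tgt sv se u s \<longleftrightarrow>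
     skew_sym_graph V E src tgt sv se \<and> (\<forall>a\<in>E. 0 \<le> u a) \<and> symmetric_on E se u \<and> s \<in> V"

definition is_flow ::
  "'v set \<Rightarrow> 'a set \<Rightarrow> ('a \<Rightarrow> 'v) \<Rightarrow> ('a \<Rightarrow> 'v) \<Rightarrow> ('a \<Rightarrow> int) \<Rightarrow> 'v \<Rightarrow> 'v \<Rightarrow> ('a \<Rightarrow> int) \<Rightarrow> bool" where
  "is_flow V E src tgt cap s t f \<longleftrightarrow>
     (\<forall>a\<in>E. 0 \<le> f a \<and> f a \<le> cap a) \<and>
     (\<forall>v\<in>V - {s, t}. (\<Sum>a\<in>{a\<in>E. tgt a = v}. f a) = (\<Sum>a\<in>{a\<in>E. src a = v}. f a))"

definition flow_val :: "'a set \<Rightarrow> ('a \<Rightarrow> 'v) \<Rightarrow> ('a \<Rightarrow> 'v) \<Rightarrow> 'v \<Rightarrow> ('a \<Rightarrow> int) \<Rightarrow> int" where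
  "flow_val E src tgt s f = (\<Sum>a\<in>{a\<in>E. src a = s}. f a) - (\<Sum>a\<in>{a\<in>E. tgt a = s}. f a)"

text \<open>IS-flow (integrality is built into the type int).\<close>
definition is_IS_flow ::
  "'v set \<Rightarrow> 'a set \<Rightarrow> ('a \<Rightarrow> 'v) \<Rightarrow> ('a \<Rightarrow> 'v) \<Rightarrow> ('a \<Rightarrow> 'a) \<Rightarrow> ('a \<Rightarrow> int) \<Rightarrow> 'v \<Rightarrow> 'v
     \<Rightarrow> ('a \<Rightarrow> int) \<Rightarrow> bool" where
  "is_IS_flow V E src tgt se cap s t f \<longleftrightarrow> is_flow V E src tgt cap s t f \<and> symmetric_on E se f"

definition is_path :: "'a set \<Rightarrow> ('a \<Rightarrow> 'v) \<Rightarrow> ('a \<Rightarrow> 'v) \<Rightarrow> 'v \<Rightarrow> 'v \<Rightarrow> 'a list \<Rightarrow> bool" where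
  "is_path E src tgt x y P \<longleftrightarrow>
     P \<noteq> [] \<and> set P \<subseteq> E \<and> src (List.hd P) = x \<and> tgt (List.last P) = y \<and>
     (\<forall>i. Suc i < length P \<longrightarrow> tgt (P ! i) = src (P ! Suc i))"

definition h_regular :: "('a \<Rightarrow> 'a) \<Rightarrow> ('a \<Rightarrow> int) \<Rightarrow> 'a list \<Rightarrow> bool" where
  "h_regular se h P \<longleftrightarrow> (\<forall>a\<in>set P. 0 < h a \<and> (se a \<in> set P \<longrightarrow> 2 \<le> h a))"

definition regular :: "('a \<Rightarrow> 'a) \<Rightarrow> 'a list \<Rightarrow> bool" where
  "regular se P \<longleftrightarrow> (\<forall>a\<in>set P. se a \<notin> set P)"

text \<open>Minimum number of arcs over a set of paths; Inf {} = \<infinity>.\<close>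
definition min_len :: "'a list set \<Rightarrow> enat" where
  "min_len S = (INF P\<in>S. enat (length P))"

text \<open>The graph G+: arc (a,True) is a, arc (a,False) is the reverse arc a^R.\<close>
definition plus_E :: "'a set \<Rightarrow> ('a \<times> bool) set" where
  "plus_E E = E \<times> UNIV"
definition plus_src :: "('a \<Rightarrow> 'v) \<Rightarrow> ('a \<Rightarrow> 'v) \<Rightarrow> 'a \<times> bool \<Rightarrow> 'v" where
  "plus_src src tgt = (\<lambda>(a, b). if b then src a else tgt a)"
definition plus_tgt :: "('a \<Rightarrow> 'v) \<Rightarrow> ('a \<Rightarrow> 'v) \<Rightarrow> 'a \<times> bool \<Rightarrow> 'v" where
  "plus_tgt src tgt = (\<lambda>(a, b). if b then tgt a else src a)"
definition plus_se :: "('a \<Rightarrow> 'a) \<Rightarrow> 'a \<times> bool \<Rightarrow> 'a \<times> bool" where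
  "plus_se se = (\<lambda>(a, b). (se a, b))"

definition resid :: "('a \<Rightarrow> int) \<Rightarrow> ('a \<Rightarrow> int) \<Rightarrow> 'a \<times> bool \<Rightarrow> int" where
  "resid u f = (\<lambda>(a, b). if b then u a - f a else f a)"

definition oplus :: "('a \<Rightarrow> int) \<Rightarrow> ('a \<times> bool \<Rightarrow> int) \<Rightarrow> 'a \<Rightarrow> int" where
  "oplus f g = (\<lambda>a. f a + g (a, True) - g (a, False))"

definition r_aug_len ::
  "'a set \<Rightarrow> ('a \<Rightarrow> 'v) \<Rightarrow> ('a \<Rightarrow> 'v) \<Rightarrow> ('v \<Rightarrow> 'v) \<Rightarrow> ('a \<Rightarrow> 'a) \<Rightarrow> ('a \<Rightarrow> int) \<Rightarrow> 'v
     \<Rightarrow> ('a \<Rightarrow> int) \<Rightarrow> enat" where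
  "r_aug_len E src tgt sv se u s f =
     min_len {P. is_path (plus_E E) (plus_src src tgt) (plus_tgt src tgt) s (sv s) P \<and>
                 h_regular (plus_se se) (resid u f) P}"

text \<open>Split graph S(H,h): arc (a,True) = a_1 with capacity ceil(h a/2),
 arc (a,False) = a_2 with capacity floor(h a/2); zero-capacity arcs deleted.\<close>
definition split_E :: "'a set \<Rightarrow> ('a \<Rightarrow> int) \<Rightarrow> ('a \<times> bool) set" where
  "split_E E h = {(a, True) | a. a \<in> E \<and> 0 < (h a + 1) div 2} \<union>
                 {(a, False) | a. a \<in> E \<and> 0 < h a div 2}"
definition split_map :: "('a \<Rightarrow> 'b) \<Rightarrow> 'a \<times> bool \<Rightarrow> 'b" where
  "split_map src = (\<lambda>(a, i). src a)"
definition split_se :: "('a \<Rightarrow> 'a) \<Rightarrow> 'a \<times> bool \<Rightarrow> 'a \<times> bool" where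
  "split_se se = (\<lambda>(a, i). (se a, i))"

definition r_dist ::
  "'a set \<Rightarrow> ('a \<Rightarrow> 'v) \<Rightarrow> ('a \<Rightarrow> 'v) \<Rightarrow> ('a \<Rightarrow> 'a) \<Rightarrow> ('a \<Rightarrow> int) \<Rightarrow> 'v \<Rightarrow> 'v \<Rightarrow> enat" where
  "r_dist E src tgt se h s t =
     min_len {P. is_path (split_E E h) (split_map src) (split_map tgt) s t P \<and> regular (split_se se) P}"

text \<open>Shortest IS-flow g in (H,h): sum of g over arcs = |g| * r-dist,
  with the convention 0 * \<infinity> = 0 (so for r-dist = \<infinity> both sides must vanish).\<close>
definition shortest ::
  "'a set \<Rightarrow> ('a \<Rightarrow> 'v) \<Rightarrow> ('a \<Rightarrow> 'v) \<Rightarrow> ('a \<Rightarrow> 'a) \<Rightarrow> ('a \<Rightarrow> int) \<Rightarrow> 'v \<Rightarrow> 'v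
     \<Rightarrow> ('a \<Rightarrow> int) \<Rightarrow> bool" where
  "shortest E src tgt se h s t g \<longleftrightarrow>
     (case r_dist E src tgt se h s t of
        enat d \<Rightarrow> (\<Sum>e\<in>E. g e) = flow_val E src tgt s g * int d
      | \<infinity> \<Rightarrow> flow_val E src tgt s g = 0 \<and> (\<Sum>e\<in>E. g e) = 0)"

definition shortest_blocking ::
  "'a set \<Rightarrow> ('a \<Rightarrow> 'v) \<Rightarrow> ('a \<Rightarrow> 'v) \<Rightarrow> ('a \<Rightarrow> 'a) \<Rightarrow> ('a \<Rightarrow> int) \<Rightarrow> 'v \<Rightarrow> 'v
     \<Rightarrow> ('a \<Rightarrow> int) \<Rightarrow> bool" where
  "shortest_blocking E src tgt se h s t g \<longleftrightarrow>
     shortest E src tgt se h s t g \<and>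
     r_dist E src tgt se h s t < r_dist E src tgt se (\<lambda>e. h e - g e) s t"

end

theory Submission
  imports Defs
begin

(* Let P' be a shortest r-augmenting path for f' = f (+) g. Being shortest, P' is simple, so the
   symmetric flow x carried by P' and its mate satisfies x <= u_f' = u_f - g + g o R, where R
   reverses arcs of G+. Adding x to g and cancelling flow on opposite arcs a, a^R yields a
   symmetric flow z <= u_f of value |g| + 2 and total sum g + 2|P'| - 2Y, Y >= 0 being the
   cancelled amount. Peeling off s-s' walks that stay below z gives a u_f-regular path W with
   |W| (|g| + 2) <= sum z. Such a path lifts to a regular path of the split graph, so
   d = r-dist <= |W|, and sum g = |g| d since g is shortest; hence k <= |W| <= |P'| - Y <= k'.
   If k = k', then Y = 0 and |P'| <= d (when |g| > 0). Y = 0 says that P' uses no arc whose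
   reverse carries g, so P' is (u_f - g)-regular, contradicting blocking, which forces |g| > 0.
   If there is no P' at all, |g| > 0 alone already yields an r-augmenting path for f. *)

fun walk :: "'e set \<Rightarrow> ('e \<Rightarrow> 'v) \<Rightarrow> ('e \<Rightarrow> 'v) \<Rightarrow> 'v \<Rightarrow> 'e list \<Rightarrow> 'v \<Rightarrow> bool" where
  "walk E src tgt x [] y \<longleftrightarrow> x = y"
| "walk E src tgt x (a # W) y \<longleftrightarrow> a \<in> E \<and> src a = x \<and> walk E src tgt (tgt a) W y"

lemma walk_append:
  "walk E src tgt x (W @ R) y \<longleftrightarrow> (\<exists>v. walk E src tgt x W v \<and> walk E src tgt v R y)"
  by (induction W arbitrary: x) auto

lemma walk_subset: "walk E src tgt x W y \<Longrightarrow> set W \<subseteq> E"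
  by (induction W arbitrary: x) auto

lemma chain_Cons_Cons:
  "(\<forall>i. Suc i < length (a # b # R) \<longrightarrow> r ((a # b # R) ! i) ((a # b # R) ! Suc i)) \<longleftrightarrow>
     r a b \<and> (\<forall>i. Suc i < length (b # R) \<longrightarrow> r ((b # R) ! i) ((b # R) ! Suc i))"
  by (simp add: All_less_Suc2 del: length_Cons)

lemma walk_Cons_iff:
  "walk E src tgt x (a # Q) y \<longleftrightarrow> set (a # Q) \<subseteq> E \<and> src a = x \<and> tgt (last (a # Q)) = y \<and>
     (\<forall>i. Suc i < length (a # Q) \<longrightarrow> tgt ((a # Q) ! i) = src ((a # Q) ! Suc i))"
proof (induction Q arbitrary: a x)
  case (Cons b R)
  show ?case
    unfolding chain_Cons_Cons[where r = "\<lambda>e e'. tgt e = src e'"] walk.simps(2)[of _ _ _ _ a] Cons.IH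
    by (simp only: list.set insert_subset last.simps list.distinct if_False eq_commute[of "src b"]) blast
qed simp

lemma is_path_iff_walk: "is_path E src tgt x y P \<longleftrightarrow> P \<noteq> [] \<and> walk E src tgt x P y"
  by (cases P) (simp_all only: is_path_def walk_Cons_iff list.sel, auto)

lemma walk_shortcut_not_distinct:
  assumes "walk E src tgt x P y" "\<not> distinct P"
  obtains Q where "walk E src tgt x Q y" "set Q \<subseteq> set P" "length Q < length P"
proof -
  obtain xs ys zs e where P: "P = xs @ [e] @ ys @ [e] @ zs"
    using not_distinct_decomp[OF assms(2)] by blast
  have "walk E src tgt x (xs @ [e] @ zs) y"
    using assms(1) unfolding P walk_append by auto
  then show thesis
    by (rule that) (auto simp: P)
qed

lemma h_regular_subset: "h_regular se h P \<Longrightarrow> set Q \<subseteq> set P \<Longrightarrow> h_regular se h Q"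
  unfolding h_regular_def by blast

lemma h_regular_mono:
  "h_regular se h P \<Longrightarrow> set P \<subseteq> E \<Longrightarrow> \<forall>a\<in>E. h a \<le> h' a \<Longrightarrow> h_regular se h' P"
  unfolding h_regular_def by force

lemma shortest_regular_path_distinct:
  assumes "x \<noteq> y" and P: "is_path E src tgt x y P" "h_regular se h P"
    and shortest: "\<And>Q. is_path E src tgt x y Q \<Longrightarrow> h_regular se h Q \<Longrightarrow> length P \<le> length Q"
  shows "distinct P"
proof (rule ccontr)
  assume "\<not> distinct P"
  have "walk E src tgt x P y"
    using P(1) by (simp add: is_path_iff_walk)
  then obtain Q where Q: "walk E src tgt x Q y" "set Q \<subseteq> set P" "length Q < length P"
    using \<open>\<not> distinct P\<close> by (rule walk_shortcut_not_distinct)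
  have "Q \<noteq> []"
    using Q(1) \<open>x \<noteq> y\<close> by (cases Q) auto
  then have "length P \<le> length Q"
    using Q h_regular_subset[OF P(2)] by (intro shortest) (auto simp: is_path_iff_walk)
  with Q(3) show False by simp
qed

lemma flow_val_add:
  "flow_val E src tgt v (\<lambda>a. p a + q a) = flow_val E src tgt v p + flow_val E src tgt v q"
  unfolding flow_val_def by (simp add: sum.distrib)

lemma flow_val_diff:
  "flow_val E src tgt v (\<lambda>a. p a - q a) = flow_val E src tgt v p - flow_val E src tgt v q"
  unfolding flow_val_def by (simp add: sum_subtractf)

lemma flow_val_arc:
  assumes "finite E" "a \<in> E"
  shows "flow_val E src tgt v (\<lambda>b. of_bool (a = b)) = of_bool (src a = v) - of_bool (tgt a = v)"
  using assms unfolding flow_val_def by (simp add: of_bool_def sum.delta)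

lemma flow_val_walk:
  assumes "finite E" "walk E src tgt x W y"
  shows "flow_val E src tgt v (\<lambda>a. int (count_list W a)) = of_bool (v = x) - of_bool (v = y)"
  using assms(2)
proof (induction W arbitrary: x)
  case Nil
  then show ?case by (simp add: flow_val_def)
next
  case (Cons a W)
  have "(\<lambda>b. int (count_list (a # W) b)) = (\<lambda>b. of_bool (a = b) + int (count_list W b))"
    by auto
  moreover have "a \<in> E" "x = src a" "walk E src tgt (tgt a) W y"
    using Cons.prems by auto
  ultimately show ?case
    using Cons.IH flow_val_arc[OF assms(1) \<open>a \<in> E\<close>, of src tgt v] by (simp add: flow_val_add)
qed

lemma count_list_distinct: "distinct W \<Longrightarrow> count_list W a = of_bool (a \<in> set W)"
  by (induction W) auto

lemma min_len_le: "P \<in> S \<Longrightarrow> min_len S \<le> enat (length P)"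
  unfolding min_len_def by (rule INF_lower)

lemma min_len_empty: "min_len {} = \<infinity>"
  by (simp add: min_len_def top_enat_def)

lemma min_len_attained:
  assumes "S \<noteq> {}"
  obtains P where "P \<in> S" "min_len S = enat (length P)" "\<And>Q. Q \<in> S \<Longrightarrow> length P \<le> length Q"
proof -
  obtain P where P: "P \<in> S" and least: "\<And>Q. Q \<in> S \<Longrightarrow> length P \<le> length Q"
    using assms ex_has_least_nat[of "\<lambda>P. P \<in> S" _ length] by blast
  have "min_len S = enat (length P)"
    unfolding min_len_def by (intro antisym INF_lower[OF P] INF_greatest) (simp add: least)
  with P least show thesis by (intro that)
qed

lemma min_len_less_infinity:
  assumes "S \<noteq> {}"
  shows "min_len S < \<infinity>"
proof -
  obtain P where "P \<in> S"
    using assms by blast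
  then have "min_len S \<le> enat (length P)"
    by (rule min_len_le)
  then show ?thesis
    by (rule le_less_trans) simp
qed

locale skew_graph =
  fixes V :: "'v set" and E :: "'e set" and src tgt :: "'e \<Rightarrow> 'v"
    and sv :: "'v \<Rightarrow> 'v" and se :: "'e \<Rightarrow> 'e"
  assumes skew_sym_graph: "skew_sym_graph V E src tgt sv se"
begin

lemma finite_E: "finite E"
  and tgt_in_V: "a \<in> E \<Longrightarrow> tgt a \<in> V"
  and sv_in_V: "v \<in> V \<Longrightarrow> sv v \<in> V" and sv_neq: "v \<in> V \<Longrightarrow> sv v \<noteq> v"
  and sv_sv: "v \<in> V \<Longrightarrow> sv (sv v) = v"
  and se_in_E: "a \<in> E \<Longrightarrow> se a \<in> E" and se_neq: "a \<in> E \<Longrightarrow> se a \<noteq> a"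
  and se_se: "a \<in> E \<Longrightarrow> se (se a) = a"
  and src_se: "a \<in> E \<Longrightarrow> src (se a) = sv (tgt a)" and tgt_se: "a \<in> E \<Longrightarrow> tgt (se a) = sv (src a)"
  using skew_sym_graph unfolding skew_sym_graph_def by auto

lemma walk_end_in_V: "walk E src tgt x W y \<Longrightarrow> x \<in> V \<Longrightarrow> y \<in> V"
  by (induction W arbitrary: x) (auto simp: tgt_in_V)

lemma sum_mate: "(\<Sum>a\<in>E. z (se a)) = (\<Sum>a\<in>E. z a)"
  by (rule sum.reindex_bij_witness[where i = se and j = se]) (auto simp: se_in_E se_se)

lemma flow_val_mate:
  assumes "v \<in> V"
  shows "flow_val E src tgt v (\<lambda>a. z (se a)) = - flow_val E src tgt (sv v) z"
proof -
  have "(\<Sum>a\<in>{a\<in>E. src a = v}. z (se a)) = (\<Sum>a\<in>{a\<in>E. tgt a = sv v}. z a)"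
    "(\<Sum>a\<in>{a\<in>E. tgt a = v}. z (se a)) = (\<Sum>a\<in>{a\<in>E. src a = sv v}. z a)"
    by (rule sum.reindex_bij_witness[where i = se and j = se];
        use assms in \<open>auto simp: se_in_E se_se src_se tgt_se sv_sv sv_in_V\<close>)+
  then show ?thesis
    unfolding flow_val_def by simp
qed

definition walk_flow :: "'e list \<Rightarrow> 'e \<Rightarrow> int" where
  "walk_flow W a = int (count_list W a) + int (count_list W (se a))"

lemma walk_flow_mate: "a \<in> E \<Longrightarrow> walk_flow W (se a) = walk_flow W a"
  unfolding walk_flow_def by (simp add: se_se)

lemma walk_flow_snoc:
  "walk_flow (W @ [e]) a = walk_flow W a + of_bool (e = a) + of_bool (e = se a)"
  unfolding walk_flow_def by simp

lemma sum_walk_flow: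
  assumes "set W \<subseteq> E"
  shows "(\<Sum>a\<in>E. walk_flow W a) = 2 * int (length W)"
proof -
  have "(\<Sum>a\<in>E. int (count_list W a)) = int (length W)"
    using sum_count_set[OF assms finite_E] by (simp flip: of_nat_sum)
  then show ?thesis
    unfolding walk_flow_def sum.distrib sum_mate[of "\<lambda>a. int (count_list W a)"] by simp
qed

lemma flow_val_walk_flow:
  assumes "walk E src tgt x W y" "v \<in> V"
  shows "flow_val E src tgt v (walk_flow W) =
    (of_bool (v = x) - of_bool (v = y)) - (of_bool (sv v = x) - of_bool (sv v = y))"
  unfolding walk_flow_def flow_val_add flow_val_mate[OF assms(2), of "\<lambda>a. int (count_list W a)"]
  using flow_val_walk[OF finite_E assms(1)] by simp

definition sym_flow :: "'v \<Rightarrow> ('e \<Rightarrow> int) \<Rightarrow> bool" where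
  "sym_flow s z \<longleftrightarrow> (\<forall>a\<in>E. 0 \<le> z a \<and> z (se a) = z a) \<and>
     (\<forall>v\<in>V - {s, sv s}. flow_val E src tgt v z = 0)"

lemma sym_flow_walk_flow:
  assumes "s \<in> V" "walk E src tgt s W (sv s)"
  shows "sym_flow s (walk_flow W)" "flow_val E src tgt s (walk_flow W) = 2"
proof -
  have "flow_val E src tgt v (walk_flow W) = 0" if "v \<in> V - {s, sv s}" for v
    using that flow_val_walk_flow[OF assms(2)] sv_sv[OF assms(1)] sv_sv[of v] by auto
  then show "sym_flow s (walk_flow W)"
    unfolding sym_flow_def by (auto simp: walk_flow_mate) (simp add: walk_flow_def)
  show "flow_val E src tgt s (walk_flow W) = 2"
    using flow_val_walk_flow[OF assms(2,1)] sv_neq[OF assms(1)] by simp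
qed

lemma sym_flow_diff:
  assumes "sym_flow s z" "sym_flow s y" "\<forall>a\<in>E. y a \<le> z a"
  shows "sym_flow s (\<lambda>a. z a - y a)"
  using assms unfolding sym_flow_def flow_val_diff by auto

lemma regular_if_walk_flow_le:
  assumes "set W \<subseteq> E" "\<forall>a\<in>E. walk_flow W a \<le> z a"
  shows "h_regular se z W"
  unfolding h_regular_def
proof (intro ballI conjI impI)
  fix a assume a: "a \<in> set W"
  then have "1 \<le> int (count_list W a)" and "walk_flow W a \<le> z a"
    using assms count_list_0_iff[of W a] by auto
  then show "0 < z a"
    unfolding walk_flow_def by linarith
  assume "se a \<in> set W"
  then have "1 \<le> int (count_list W (se a))"
    using count_list_0_iff[of W "se a"] by simp
  with \<open>1 \<le> int (count_list W a)\<close> \<open>walk_flow W a \<le> z a\<close> show "2 \<le> z a"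
    unfolding walk_flow_def by linarith
qed

lemma walk_flow_le_if_regular:
  assumes "distinct W" "h_regular se c W" "a \<in> E" "0 \<le> c a" "c (se a) = c a"
  shows "walk_flow W a \<le> c a"
  using assms unfolding walk_flow_def h_regular_def count_list_distinct[OF assms(1)]
  by (cases "a \<in> set W"; cases "se a \<in> set W") (auto simp: se_se)

lemma unsaturated_out_arc:
  assumes "s \<in> V" "sym_flow s z" "0 < flow_val E src tgt s z"
    and "walk E src tgt s W v" "v \<noteq> sv s" "\<forall>a\<in>E. walk_flow W a \<le> z a"
  obtains e where "e \<in> E" "src e = v" "walk_flow W e < z e"
proof -
  have v: "v \<in> V"
    using walk_end_in_V[OF assms(4,1)] .
  have "sv v \<noteq> s"
    using assms(5) sv_sv[OF v] by auto
  then have "flow_val E src tgt v (walk_flow W) = of_bool (v = s) - 1"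
    using flow_val_walk_flow[OF assms(4) v] sv_neq[OF v] by simp
  also have "\<dots> < flow_val E src tgt v z"
    using assms(2,3,5) v unfolding sym_flow_def by (cases "v = s") auto
  finally have "(\<Sum>a\<in>{a\<in>E. src a = v}. walk_flow W a) < (\<Sum>a\<in>{a\<in>E. src a = v}. z a)"
    using sum_mono[of "{a\<in>E. tgt a = v}" "walk_flow W" z] assms(6)
    unfolding flow_val_def by auto
  then show thesis
    using that sum_mono[of "{a\<in>E. src a = v}" z "walk_flow W"] by force
qed

lemma walk_flow_snoc_le:
  assumes "sym_flow s z" "\<forall>a\<in>E. walk_flow W a \<le> z a" "e \<in> E" "walk_flow W e < z e"
  shows "\<forall>a\<in>E. walk_flow (W @ [e]) a \<le> z a"
proof
  fix a assume a: "a \<in> E"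
  have "z (se e) = z e"
    using assms(1,3) unfolding sym_flow_def by auto
  then show "walk_flow (W @ [e]) a \<le> z a"
    using assms(2,4) a se_neq[OF assms(3)] se_se[OF a] walk_flow_mate[OF assms(3)]
    by (cases "a = e \<or> a = se e") (auto simp: walk_flow_snoc)
qed

lemma walk_completion_below_flow:
  assumes "s \<in> V" "sym_flow s z" "0 < flow_val E src tgt s z"
  shows "walk E src tgt s W v \<Longrightarrow> \<forall>a\<in>E. walk_flow W a \<le> z a \<Longrightarrow>
    \<exists>R. walk E src tgt s (W @ R) (sv s) \<and> (\<forall>a\<in>E. walk_flow (W @ R) a \<le> z a)"
proof (induction "nat ((\<Sum>a\<in>E. z a) - 2 * int (length W))" arbitrary: W v rule: less_induct)
  case less
  show ?case
  proof (cases "v = sv s")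
    case True
    with less.prems show ?thesis by (intro exI[of _ "[]"]) auto
  next
    case False
    then obtain e where e: "e \<in> E" "src e = v" "walk_flow W e < z e"
      using unsaturated_out_arc[OF assms less.prems(1) _ less.prems(2)] by blast
    have walk': "walk E src tgt s (W @ [e]) (tgt e)"
      using less.prems(1) e by (auto simp: walk_append)
    have le': "\<forall>a\<in>E. walk_flow (W @ [e]) a \<le> z a"
      using walk_flow_snoc_le[OF assms(2) less.prems(2) e(1,3)] .
    have "2 * int (length (W @ [e])) \<le> (\<Sum>a\<in>E. z a)"
      using sum_mono[of E "walk_flow (W @ [e])" z] le' sum_walk_flow[OF walk_subset[OF walk']]
      by simp
    then have "nat ((\<Sum>a\<in>E. z a) - 2 * int (length (W @ [e])))
        < nat ((\<Sum>a\<in>E. z a) - 2 * int (length W))"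
      by simp
    then obtain R where "walk E src tgt s (W @ [e] @ R) (sv s)" "\<forall>a\<in>E. walk_flow (W @ [e] @ R) a \<le> z a"
      using less.hyps[OF _ walk' le'] by auto
    then show ?thesis
      by (intro exI[of _ "e # R"]) simp
  qed
qed

lemma sym_flow_minus_walk_flow:
  assumes "s \<in> V" "sym_flow s z" "walk E src tgt s R (sv s)" "\<forall>a\<in>E. walk_flow R a \<le> z a"
  shows "sym_flow s (\<lambda>a. z a - walk_flow R a)"
    and "flow_val E src tgt s (\<lambda>a. z a - walk_flow R a) = flow_val E src tgt s z - 2"
    and "(\<Sum>a\<in>E. z a - walk_flow R a) = (\<Sum>a\<in>E. z a) - 2 * int (length R)"
  using sym_flow_diff[OF assms(2) sym_flow_walk_flow(1)[OF assms(1,3)] assms(4)]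
    sym_flow_walk_flow(2)[OF assms(1,3)] sum_walk_flow[OF walk_subset[OF assms(3)]]
  by (simp_all add: flow_val_diff sum_subtractf)

lemma regular_walk_below_average:
  assumes "s \<in> V"
  shows "sym_flow s z \<Longrightarrow> 0 < flow_val E src tgt s z \<Longrightarrow>
    \<exists>W. walk E src tgt s W (sv s) \<and> h_regular se z W \<and>
        int (length W) * flow_val E src tgt s z \<le> (\<Sum>a\<in>E. z a)"
proof (induction "nat (\<Sum>a\<in>E. z a)" arbitrary: z rule: less_induct)
  case less
  obtain R where R: "walk E src tgt s R (sv s)" and R_le: "\<forall>a\<in>E. walk_flow R a \<le> z a"
    using walk_completion_below_flow[OF assms less.prems, of "[]" s] less.prems(1)
    by (auto simp: walk_flow_def sym_flow_def)
  have R_regular: "h_regular se z R"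
    using regular_if_walk_flow_le[OF walk_subset[OF R] R_le] .
  define z' where "z' = (\<lambda>a. z a - walk_flow R a)"
  have z': "sym_flow s z'" and val_z': "flow_val E src tgt s z' = flow_val E src tgt s z - 2"
    and sum_z': "(\<Sum>a\<in>E. z' a) = (\<Sum>a\<in>E. z a) - 2 * int (length R)"
    unfolding z'_def using sym_flow_minus_walk_flow[OF assms less.prems(1) R R_le] by auto
  have "0 \<le> (\<Sum>a\<in>E. z' a)"
    using z' unfolding sym_flow_def by (intro sum_nonneg) auto
  show ?case
  proof (cases "0 < flow_val E src tgt s z'")
    case False
    then have "int (length R) * flow_val E src tgt s z \<le> int (length R) * 2"
      using val_z' by (intro mult_left_mono) auto
    with R R_regular sum_z' \<open>0 \<le> (\<Sum>a\<in>E. z' a)\<close> show ?thesis by auto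
  next
    case True
    have "nat (\<Sum>a\<in>E. z' a) < nat (\<Sum>a\<in>E. z a)"
      using R sv_neq[OF assms] sum_z' \<open>0 \<le> (\<Sum>a\<in>E. z' a)\<close> by (cases R) auto
    then obtain W where W: "walk E src tgt s W (sv s)" "h_regular se z' W"
        and W_le: "int (length W) * flow_val E src tgt s z' \<le> (\<Sum>a\<in>E. z' a)"
      using less.hyps z' True by blast
    have "h_regular se z W"
      using h_regular_mono[OF W(2) walk_subset[OF W(1)]] by (simp add: z'_def walk_flow_def)
    define W' where "W' = (if length W \<le> length R then W else R)"
    have "int (length W') * (flow_val E src tgt s z - 2) \<le> int (length W) * (flow_val E src tgt s z - 2)"
      using True val_z' by (intro mult_right_mono) (auto simp: W'_def)
    then have "int (length W') * flow_val E src tgt s z \<le> (\<Sum>a\<in>E. z a)"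
      using W_le val_z' sum_z' by (simp add: W'_def algebra_simps split: if_splits)
    moreover have "walk E src tgt s W' (sv s) \<and> h_regular se z W'"
      using W R R_regular \<open>h_regular se z W\<close> by (simp add: W'_def)
    ultimately show ?thesis by blast
  qed
qed

lemma sym_flow_cancel_reverse:
  assumes rv: "\<And>e. e \<in> E \<Longrightarrow> rv e \<in> E \<and> rv (rv e) = e \<and> src (rv e) = tgt e \<and>
      tgt (rv e) = src e \<and> se (rv e) = rv (se e)"
    and g: "sym_flow s g" and x: "sym_flow s x"
  defines "y \<equiv> \<lambda>e. min (x e) (g (rv e))"
  shows "sym_flow s (\<lambda>e. g e + x e - y e - y (rv e))"
    and "flow_val E src tgt s (\<lambda>e. g e + x e - y e - y (rv e)) =
      flow_val E src tgt s g + flow_val E src tgt s x"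
    and "(\<Sum>e\<in>E. g e + x e - y e - y (rv e)) = (\<Sum>e\<in>E. g e) + (\<Sum>e\<in>E. x e) - 2 * (\<Sum>e\<in>E. y e)"
proof -
  have sum_rv: "(\<Sum>e\<in>A. y (rv e)) = (\<Sum>e\<in>B. y e)"
    if "\<And>e. e \<in> A \<Longrightarrow> rv e \<in> B" "\<And>e. e \<in> B \<Longrightarrow> rv e \<in> A" "A \<subseteq> E" "B \<subseteq> E" for A B
    by (rule sum.reindex_bij_witness[where i = rv and j = rv]) (use that rv in auto)
  have flow_val_rv: "flow_val E src tgt v (\<lambda>e. y (rv e)) = - flow_val E src tgt v y" for v
    unfolding flow_val_def by (subst (1 2) sum_rv) (use rv in auto)
  have flow_val_z: "flow_val E src tgt v (\<lambda>e. g e + x e - y e - y (rv e)) =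
      flow_val E src tgt v g + flow_val E src tgt v x" for v
    unfolding flow_val_diff flow_val_add flow_val_rv by simp
  then show "flow_val E src tgt s (\<lambda>e. g e + x e - y e - y (rv e)) =
      flow_val E src tgt s g + flow_val E src tgt s x" .
  show "(\<Sum>e\<in>E. g e + x e - y e - y (rv e)) = (\<Sum>e\<in>E. g e) + (\<Sum>e\<in>E. x e) - 2 * (\<Sum>e\<in>E. y e)"
    using sum_rv[of E E] rv by (simp add: sum.distrib sum_subtractf)
  have g_mate: "g (se e) = g e" and x_mate: "x (se e) = x e" if "e \<in> E" for e
    using g x that unfolding sym_flow_def by auto
  have y_mate: "y (se e) = y e" if "e \<in> E" for e
    using rv[OF that] g_mate[of "rv e"] x_mate[OF that] unfolding y_def by simp
  have "0 \<le> g e + x e - y e - y (rv e)" if "e \<in> E" for e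
    using rv[OF that] unfolding y_def by simp
  moreover have "y (rv (se e)) = y (rv e)" if "e \<in> E" for e
    using rv[OF that] y_mate[of "rv e"] by simp
  ultimately show "sym_flow s (\<lambda>e. g e + x e - y e - y (rv e))"
    using g x flow_val_z unfolding sym_flow_def by (auto simp: g_mate x_mate y_mate)
qed

end

lemma walk_map_split:
  "walk E src tgt x P y \<Longrightarrow> \<forall>a\<in>set P. (a, lab a) \<in> E' \<Longrightarrow>
    walk E' (split_map src) (split_map tgt) x (map (\<lambda>a. (a, lab a)) P) y"
  by (induction P arbitrary: x) (auto simp: split_map_def)

(* (a, True) and (a, False) are the copies a_1 and a_2 of a. When both a and its mate lie on P,
   exactly one of them is sent to its second copy, which exists because then h a >= 2. *)
definition split_label :: "('a \<Rightarrow> 'a) \<Rightarrow> 'a list \<Rightarrow> 'a \<Rightarrow> bool" where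
  "split_label se P a \<longleftrightarrow> se a \<notin> set P \<or> (SOME b. b \<in> {a, se a}) = a"

lemma split_label_mate:
  assumes "se a \<noteq> a" "se (se a) = a" "a \<in> set P" "se a \<in> set P"
  shows "split_label se P (se a) \<longleftrightarrow> \<not> split_label se P a"
proof -
  have "(SOME b. b \<in> {se a, se (se a)}) = (SOME b. b \<in> {a, se a})"
    using assms(2) by (simp add: insert_commute)
  moreover have "(SOME b. b \<in> {a, se a}) \<in> {a, se a}"
    by (rule someI[of _ a]) simp
  ultimately show ?thesis
    using assms unfolding split_label_def by auto
qed

lemma regular_split_lift:
  assumes "\<forall>a\<in>set P. se a \<noteq> a \<and> se (se a) = a"
  shows "regular (split_se se) (map (\<lambda>a. (a, split_label se P a)) P)"
  unfolding regular_def
proof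
  fix q assume "q \<in> set (map (\<lambda>a. (a, split_label se P a)) P)"
  then obtain a where a: "a \<in> set P" and q: "q = (a, split_label se P a)"
    by auto
  show "split_se se q \<notin> set (map (\<lambda>a. (a, split_label se P a)) P)"
  proof
    assume "split_se se q \<in> set (map (\<lambda>a. (a, split_label se P a)) P)"
    then have "se a \<in> set P" "split_label se P (se a) = split_label se P a"
      using q unfolding split_se_def by auto
    with split_label_mate[of se a P] assms a show False
      by auto
  qed
qed

lemma r_dist_le_regular_path:
  assumes se: "\<forall>a\<in>E. se a \<noteq> a \<and> se (se a) = a"
    and P: "is_path E src tgt x y P" and regular: "h_regular se h P"
  shows "r_dist E src tgt se h x y \<le> enat (length P)"
proof -
  define Q where "Q = map (\<lambda>a. (a, split_label se P a)) P"
  have PE: "set P \<subseteq> E"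
    using P unfolding is_path_def by auto
  have "(a, split_label se P a) \<in> split_E E h" if a: "a \<in> set P" for a
  proof (cases "split_label se P a")
    case True
    then show ?thesis
      using a PE regular unfolding h_regular_def split_E_def by auto
  next
    case False
    then have "2 \<le> h a"
      using a regular unfolding h_regular_def split_label_def by auto
    with False show ?thesis
      using a PE unfolding split_E_def by auto
  qed
  then have "is_path (split_E E h) (split_map src) (split_map tgt) x y Q"
    using P walk_map_split[of E src tgt x P y] unfolding is_path_iff_walk Q_def by auto
  moreover have "regular (split_se se) Q"
    unfolding Q_def using se PE by (intro regular_split_lift) auto
  ultimately have "r_dist E src tgt se h x y \<le> enat (length Q)"
    unfolding r_dist_def by (intro min_len_le) simp
  then show ?thesis
    unfolding Q_def by simp
qed

lemma r_dist_pos: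
  assumes "r_dist E src tgt se h x y = enat k"
  shows "0 < k"
proof -
  let ?S = "{P. is_path (split_E E h) (split_map src) (split_map tgt) x y P \<and> regular (split_se se) P}"
  have "?S \<noteq> {}"
    using assms min_len_empty unfolding r_dist_def by (metis enat.distinct(2))
  then obtain P where "P \<in> ?S" "min_len ?S = enat (length P)"
    by (rule min_len_attained)
  with assms show ?thesis
    unfolding r_dist_def is_path_def by auto
qed

definition reverse_arc :: "'a \<times> bool \<Rightarrow> 'a \<times> bool" where
  "reverse_arc = (\<lambda>(a, b). (a, \<not> b))"

lemma reverse_arc_in_plus_E: "e \<in> plus_E E \<Longrightarrow> reverse_arc e \<in> plus_E E"
  unfolding reverse_arc_def plus_E_def by (cases e) simp

lemma reverse_arc_plus:
  "e \<in> plus_E E \<Longrightarrow> reverse_arc e \<in> plus_E E \<and> reverse_arc (reverse_arc e) = e \<and>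
    plus_src src tgt (reverse_arc e) = plus_tgt src tgt e \<and>
    plus_tgt src tgt (reverse_arc e) = plus_src src tgt e \<and>
    plus_se se (reverse_arc e) = reverse_arc (plus_se se e)"
  unfolding reverse_arc_def plus_E_def plus_src_def plus_tgt_def plus_se_def by (cases e) auto

lemma resid_oplus: "resid u (oplus f g) e = resid u f e - g e + g (reverse_arc e)"
  unfolding resid_def oplus_def reverse_arc_def by (cases e) auto

lemma skew_sym_graph_plus:
  "skew_sym_graph V E src tgt sv se \<Longrightarrow>
    skew_sym_graph V (plus_E E) (plus_src src tgt) (plus_tgt src tgt) sv (plus_se se)"
  unfolding skew_sym_graph_def plus_E_def plus_src_def plus_tgt_def plus_se_def by auto

lemma symmetric_on_resid:
  "symmetric_on E se u \<Longrightarrow> symmetric_on E se f \<Longrightarrow> symmetric_on (plus_E E) (plus_se se) (resid u f)"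
  unfolding symmetric_on_def resid_def plus_se_def plus_E_def by auto

lemma symmetric_on_oplus:
  "symmetric_on E se f \<Longrightarrow> symmetric_on (plus_E E) (plus_se se) g \<Longrightarrow> symmetric_on E se (oplus f g)"
  unfolding symmetric_on_def oplus_def plus_se_def plus_E_def by force

locale shortest_augmentation =
  fixes V :: "'v set" and E :: "'a set" and src tgt :: "'a \<Rightarrow> 'v"
    and sv :: "'v \<Rightarrow> 'v" and se :: "'a \<Rightarrow> 'a" and u f :: "'a \<Rightarrow> int" and s :: 'v
    and g :: "'a \<times> bool \<Rightarrow> int"
  assumes network: "skew_network V E src tgt sv se u s"
    and f_flow: "is_IS_flow V E src tgt se u s (sv s) f"
    and g_flow: "is_IS_flow V (plus_E E) (plus_src src tgt) (plus_tgt src tgt) (plus_se se)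
      (resid u f) s (sv s) g"
    and g_shortest: "shortest (plus_E E) (plus_src src tgt) (plus_tgt src tgt) (plus_se se)
      (resid u f) s (sv s) g"
begin

abbreviation "Ep \<equiv> plus_E E"
abbreviation "srcp \<equiv> plus_src src tgt"
abbreviation "tgtp \<equiv> plus_tgt src tgt"
abbreviation "sep \<equiv> plus_se se"
abbreviation "uf \<equiv> resid u f"
abbreviation "uf' \<equiv> resid u (oplus f g)"
abbreviation "g_val \<equiv> flow_val Ep srcp tgtp s g"
abbreviation "rdist \<equiv> r_dist Ep srcp tgtp sep uf s (sv s)"
abbreviation "aug_paths h \<equiv> {P. is_path Ep srcp tgtp s (sv s) P \<and> h_regular sep h P}"

sublocale H: skew_graph V Ep srcp tgtp sv sep
  using network skew_sym_graph_plus unfolding skew_network_def by unfold_locales blast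

lemma s_in_V: "s \<in> V"
  using network unfolding skew_network_def by simp

lemma g_sym_flow: "H.sym_flow s g"
  using g_flow unfolding is_IS_flow_def is_flow_def symmetric_on_def H.sym_flow_def flow_val_def
  by auto

lemma g_nonneg: "e \<in> Ep \<Longrightarrow> 0 \<le> g e"
  using g_flow unfolding is_IS_flow_def is_flow_def by simp

lemma g_le_uf: "e \<in> Ep \<Longrightarrow> g e \<le> uf e"
  using g_flow unfolding is_IS_flow_def is_flow_def by simp

lemma uf'_nonneg:
  assumes "e \<in> Ep"
  shows "0 \<le> uf' e"
  using g_le_uf[OF assms] g_nonneg[OF reverse_arc_in_plus_E[OF assms]] unfolding resid_oplus by simp

lemma uf'_mate: "e \<in> Ep \<Longrightarrow> uf' (sep e) = uf' e"
  using network f_flow g_flow unfolding skew_network_def is_IS_flow_def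
  by (meson symmetric_on_def symmetric_on_oplus symmetric_on_resid)

lemma sum_g: "rdist = enat k \<Longrightarrow> (\<Sum>e\<in>Ep. g e) = g_val * int k"
  using g_shortest unfolding shortest_def by simp

lemma g_val_nonneg: "0 \<le> g_val"
proof (cases rdist)
  case (enat k)
  have "0 \<le> (\<Sum>e\<in>Ep. g e)"
    using g_sym_flow unfolding H.sym_flow_def by (intro sum_nonneg) auto
  with sum_g[OF enat] r_dist_pos[OF enat] show ?thesis
    by (simp add: zero_le_mult_iff)
next
  case infinity
  then show ?thesis
    using g_shortest unfolding shortest_def by simp
qed

lemma g_val_pos_if_blocking:
  assumes "shortest_blocking Ep srcp tgtp sep uf s (sv s) g"
  shows "0 < g_val"
proof (rule ccontr)
  have lt: "rdist < r_dist Ep srcp tgtp sep (\<lambda>e. uf e - g e) s (sv s)"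
    using assms unfolding shortest_blocking_def by simp
  then obtain k where k: "rdist = enat k"
    by (cases rdist) auto
  assume "\<not> 0 < g_val"
  then have "(\<Sum>e\<in>Ep. g e) = 0"
    using g_val_nonneg sum_g[OF k] by simp
  then have "\<forall>e\<in>Ep. g e = 0"
    using sum_nonneg_eq_0_iff[OF H.finite_E] g_sym_flow unfolding H.sym_flow_def by blast
  then have "split_E Ep (\<lambda>e. uf e - g e) = split_E Ep uf"
    unfolding split_E_def by auto
  with lt show False
    unfolding r_dist_def by simp
qed

lemma walk_flow_le_uf':
  assumes "distinct P" "h_regular sep uf' P" "e \<in> Ep"
  shows "H.walk_flow P e \<le> uf' e"
  using H.walk_flow_le_if_regular[OF assms uf'_nonneg[OF assms(3)] uf'_mate[OF assms(3)]] .

lemma combined_flow: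
  assumes "distinct P" "walk Ep srcp tgtp s P (sv s)" "h_regular sep uf' P"
  obtains z Y where "H.sym_flow s z" "\<forall>e\<in>Ep. z e \<le> uf e" "flow_val Ep srcp tgtp s z = g_val + 2"
    "(\<Sum>e\<in>Ep. z e) = (\<Sum>e\<in>Ep. g e) + 2 * int (length P) - 2 * Y" "0 \<le> Y"
    "Y = 0 \<Longrightarrow> \<forall>e\<in>set P. g (reverse_arc e) = 0"
proof -
  define x where "x = H.walk_flow P"
  define y where "y = (\<lambda>e. min (x e) (g (reverse_arc e)))"
  define z where "z = (\<lambda>e. g e + x e - y e - y (reverse_arc e))"
  have x: "H.sym_flow s x" "flow_val Ep srcp tgtp s x = 2"
    unfolding x_def using H.sym_flow_walk_flow[OF s_in_V assms(2)] by auto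
  have sum_x: "(\<Sum>e\<in>Ep. x e) = 2 * int (length P)"
    unfolding x_def using H.sum_walk_flow[OF walk_subset[OF assms(2)]] .
  have x_nonneg: "0 \<le> x e" for e
    unfolding x_def H.walk_flow_def by simp
  have y_nonneg: "0 \<le> y e" if "e \<in> Ep" for e
    unfolding y_def using x_nonneg g_nonneg[OF reverse_arc_in_plus_E[OF that]] by simp
  have z: "H.sym_flow s z" "flow_val Ep srcp tgtp s z = g_val + 2"
    "(\<Sum>e\<in>Ep. z e) = (\<Sum>e\<in>Ep. g e) + 2 * int (length P) - 2 * (\<Sum>e\<in>Ep. y e)"
    using H.sym_flow_cancel_reverse[of reverse_arc, OF reverse_arc_plus g_sym_flow x(1)] x(2) sum_x
    unfolding z_def y_def by auto
  have "z e \<le> uf e" if e: "e \<in> Ep" for e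
    using walk_flow_le_uf'[OF assms(1,3) e] y_nonneg[OF reverse_arc_in_plus_E[OF e]] g_le_uf[OF e]
    unfolding z_def y_def x_def resid_oplus by linarith
  moreover have "0 \<le> (\<Sum>e\<in>Ep. y e)"
    using y_nonneg by (intro sum_nonneg) auto
  moreover have "\<forall>e\<in>set P. g (reverse_arc e) = 0" if "(\<Sum>e\<in>Ep. y e) = 0"
  proof
    fix e assume e: "e \<in> set P"
    then have "e \<in> Ep"
      using walk_subset[OF assms(2)] by auto
    then have "y e = 0"
      using that sum_nonneg_eq_0_iff[OF H.finite_E, of y] y_nonneg by auto
    moreover have "1 \<le> x e"
      using e count_list_0_iff[of P e] unfolding x_def H.walk_flow_def by simp
    ultimately show "g (reverse_arc e) = 0"
      using g_nonneg[OF reverse_arc_in_plus_E[OF \<open>e \<in> Ep\<close>]] unfolding y_def by linarith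
  qed
  ultimately show thesis
    using that[of z "\<Sum>e\<in>Ep. y e"] z by blast
qed

lemma s_neq_sv_s: "s \<noteq> sv s"
  using H.sv_neq[OF s_in_V] by simp

lemma aug_path_iff_walk: "P \<in> aug_paths h \<longleftrightarrow> walk Ep srcp tgtp s P (sv s) \<and> h_regular sep h P"
  using s_neq_sv_s by (cases P) (auto simp: is_path_iff_walk)

lemma shortest_aug_path:
  assumes "aug_paths h \<noteq> {}"
  obtains P where "P \<in> aug_paths h" "distinct P" "min_len (aug_paths h) = enat (length P)"
proof -
  obtain P where P: "P \<in> aug_paths h" "min_len (aug_paths h) = enat (length P)"
    and least: "\<And>Q. Q \<in> aug_paths h \<Longrightarrow> length P \<le> length Q"
    using min_len_attained[OF assms] by blast
  have "distinct P"
    using P(1) least by (intro shortest_regular_path_distinct[OF s_neq_sv_s]) auto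
  with P show thesis by (intro that)
qed

lemma shorter_aug_path:
  assumes P: "distinct P" "P \<in> aug_paths uf'"
  obtains W where "W \<in> aug_paths uf" "length W \<le> length P"
    "length W = length P \<Longrightarrow>
      (\<forall>e\<in>set P. g (reverse_arc e) = 0) \<and> (0 < g_val \<longrightarrow> enat (length P) \<le> rdist)"
proof -
  obtain z Y where z: "H.sym_flow s z" "\<forall>e\<in>Ep. z e \<le> uf e" "flow_val Ep srcp tgtp s z = g_val + 2"
      "(\<Sum>e\<in>Ep. z e) = (\<Sum>e\<in>Ep. g e) + 2 * int (length P) - 2 * Y"
    and Y: "0 \<le> Y" "Y = 0 \<Longrightarrow> \<forall>e\<in>set P. g (reverse_arc e) = 0"
    using combined_flow P unfolding aug_path_iff_walk by blast
  obtain W where W: "walk Ep srcp tgtp s W (sv s)" "h_regular sep z W"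
      and W_le: "int (length W) * (g_val + 2) \<le> (\<Sum>e\<in>Ep. z e)"
    using H.regular_walk_below_average[OF s_in_V z(1)] z(3) g_val_nonneg by auto
  have W_aug: "W \<in> aug_paths uf"
    using W h_regular_mono[OF W(2) walk_subset[OF W(1)]] z(2) unfolding aug_path_iff_walk by blast
  then have "rdist \<le> enat (length W)"
    using H.se_neq H.se_se by (intro r_dist_le_regular_path) auto
  then obtain k where k: "rdist = enat k" "k \<le> length W"
    by (cases rdist) auto
  have "int (length W) * (g_val + 2) = g_val * int (length W) + 2 * int (length W)"
    by (simp add: algebra_simps)
  then have bound:
    "g_val * int (length W) + 2 * int (length W) + 2 * Y \<le> g_val * int k + 2 * int (length P)"
    using W_le z(4) sum_g[OF k(1)] by linarith
  have k_le: "g_val * int k \<le> g_val * int (length W)"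
    using k(2) g_val_nonneg by (intro mult_left_mono) auto
  show thesis
  proof (rule that[OF W_aug])
    show "length W \<le> length P"
      using bound k_le Y(1) by linarith
    assume "length W = length P"
    then have "Y = 0" "g_val * int (length P) \<le> g_val * int k"
      using bound k_le Y(1) by simp_all
    then show "(\<forall>e\<in>set P. g (reverse_arc e) = 0) \<and> (0 < g_val \<longrightarrow> enat (length P) \<le> rdist)"
      using Y(2) k(1) by (auto simp: mult_le_cancel_left_pos)
  qed
qed

lemma aug_paths_nonempty:
  assumes "0 < g_val"
  shows "aug_paths uf \<noteq> {}"
proof -
  obtain W where W: "walk Ep srcp tgtp s W (sv s)" "h_regular sep g W"
    using H.regular_walk_below_average[OF s_in_V g_sym_flow assms] by blast
  then have "W \<in> aug_paths uf"
    using h_regular_mono[OF W(2) walk_subset[OF W(1)]] g_le_uf unfolding aug_path_iff_walk by blast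
  then show ?thesis
    by blast
qed

lemma min_aug_len_le: "min_len (aug_paths uf) \<le> min_len (aug_paths uf')"
proof (cases "aug_paths uf' = {}")
  case False
  then obtain P where P: "P \<in> aug_paths uf'" "distinct P" "min_len (aug_paths uf') = enat (length P)"
    by (rule shortest_aug_path)
  obtain W where W: "W \<in> aug_paths uf" "length W \<le> length P"
    using shorter_aug_path[OF P(2,1)] by blast
  have "min_len (aug_paths uf) \<le> enat (length W)"
    using W(1) by (rule min_len_le)
  also have "\<dots> \<le> min_len (aug_paths uf')"
    using W(2) P(3) by simp
  finally show ?thesis .
next
  case True
  then show ?thesis
    unfolding True min_len_empty by simp
qed

lemma min_aug_len_less:
  assumes blocking: "shortest_blocking Ep srcp tgtp sep uf s (sv s) g"
  shows "min_len (aug_paths uf) < min_len (aug_paths uf')"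
proof (cases "aug_paths uf' = {}")
  case True
  have "min_len (aug_paths uf) < \<infinity>"
    using aug_paths_nonempty[OF g_val_pos_if_blocking[OF blocking]] by (rule min_len_less_infinity)
  then show ?thesis
    unfolding True min_len_empty .
next
  case False
  then obtain P where P: "P \<in> aug_paths uf'" "distinct P" "min_len (aug_paths uf') = enat (length P)"
    by (rule shortest_aug_path)
  obtain W where W: "W \<in> aug_paths uf" "length W \<le> length P"
    and tight: "length W = length P \<Longrightarrow>
      (\<forall>e\<in>set P. g (reverse_arc e) = 0) \<and> (0 < g_val \<longrightarrow> enat (length P) \<le> rdist)"
    using shorter_aug_path[OF P(2,1)] by blast
  show ?thesis
  proof (rule ccontr)
    assume "\<not> ?thesis"
    then have "enat (length P) \<le> min_len (aug_paths uf)"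
      using P(3) by (simp add: not_less)
    also have "\<dots> \<le> enat (length W)"
      using W(1) by (rule min_len_le)
    finally have "length W = length P"
      using W(2) by simp
    then have no_reverse: "\<forall>e\<in>set P. g (reverse_arc e) = 0" and "enat (length P) \<le> rdist"
      using tight g_val_pos_if_blocking[OF blocking] by auto
    have "h_regular sep (\<lambda>e. uf e - g e) P"
      using P(1) no_reverse unfolding h_regular_def resid_oplus by auto
    then have "r_dist Ep srcp tgtp sep (\<lambda>e. uf e - g e) s (sv s) \<le> enat (length P)"
      using P(1) H.se_neq H.se_se by (intro r_dist_le_regular_path) auto
    also have "\<dots> \<le> rdist"
      by fact
    finally show False
      using blocking unfolding shortest_blocking_def by (auto dest: leD)
  qed
qed

end

theorem mainTheorem8:
  fixes V :: "'v set" and E :: "'a set" and src tgt :: "'a \<Rightarrow> 'v"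
    and sv :: "'v \<Rightarrow> 'v" and se :: "'a \<Rightarrow> 'a" and u f :: "'a \<Rightarrow> int" and s :: 'v
    and g :: "'a \<times> bool \<Rightarrow> int"
  assumes "skew_network V E src tgt sv se u s"
    and "is_IS_flow V E src tgt se u s (sv s) f"
    and "is_IS_flow V (plus_E E) (plus_src src tgt) (plus_tgt src tgt) (plus_se se)
           (resid u f) s (sv s) g"
    and "shortest (plus_E E) (plus_src src tgt) (plus_tgt src tgt) (plus_se se)
           (resid u f) s (sv s) g"
  shows "r_aug_len E src tgt sv se u s f \<le> r_aug_len E src tgt sv se u s (oplus f g) \<and>
         (shortest_blocking (plus_E E) (plus_src src tgt) (plus_tgt src tgt) (plus_se se)
             (resid u f) s (sv s) g
          \<longrightarrow> r_aug_len E src tgt sv se u s f < r_aug_len E src tgt sv se u s (oplus f g))"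
proof -
  interpret shortest_augmentation V E src tgt sv se u f s g
    using assms by unfold_locales
  show ?thesis
    unfolding r_aug_len_def using min_aug_len_le min_aug_len_less by blast
qed

end
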